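(* Let $m,n$ be nonnegative integers, $I\subseteq[m-1]$, $J\subseteq[n-1]$, $K\subseteq[m+n-1]$. The following three numbers are equal: (a) the number of overlapping shuffles of $\mathrm{comp}(I^c)$ and $\mathrm{comp}(J^c)$ with weight $\mathrm{comp}(K^c)$, i.e. the coefficient of $M_{\mathrm{comp}(K^c)}$ in $M_{\mathrm{comp}(I^c)}M_{\mathrm{comp}(J^c)}$; (b) the number of $A\subseteq[m+n]$ with $|A|=n$ such that $(I\#_AJ)\cap c(A)=\emptyset$, $I\#_AJ\subseteq K\subseteq(I\#_AJ)\cup c(A)$, and $|K\setminus c_2(A)|=|I|+|J|$; (c) the number of $A\subseteq[m+n]$ with $|A|=n$ such that $(I\#_AJ)\cap c(A)=\emptyset$, $I\#_AJ\subseteq K\subseteq(I\#_AJ)\cup c(A)$, and $K\cap c_2(A)=\emptyset$.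
   Context: $[n]=\{1,\dots,n\}$ (empty if $n\le0$). Complements: $I^c=[m-1]\setminus I$, $J^c=[n-1]\setminus J$, $K^c=[m+n-1]\setminus K$. For $N\ge1$ and $S\subseteq[N-1]$, $\mathrm{comp}(\{s_1<\dots<s_i\})=(s_1,s_2-s_1,\dots,N-s_i)$ is a composition of $N$; $\mathrm{comp}(\emptyset)$ for $N=0$ is the empty composition. $M_\alpha=\sum_{j_1<\dots<j_l}x_{j_1}^{\alpha_1}\cdots x_{j_l}^{\alpha_l}$ are the monomial quasisymmetric functions ($M_\emptyset=1$). For $A\subseteq[N]$ with $N=m+n$: $\mathrm{conn}(A)$ is the set of maximal subsets of consecutive integers of $A$, $A^c=[N]\setminus A$, $c_1(A)=\{\max B:B\in\mathrm{conn}(A)\}\setminus\{N\}$, $c_2(A)=\{\max B:B\in\mathrm{conn}(A^c)\}\setminus\{N\}$, $c(A)=c_1(A)\cup c_2(A)$. For $|A|=n$, write $A=\{b_1<\dots<b_n\}$ and $[m+n]\setminus A=\{a_1<\dots<a_m\}$, and set $I\#_AJ=\{a_i:i\in I\}\cup\{b_j:j\in J\}$. *)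

theory Defs
  imports Main
begin

text \<open>[N] = {1..N}; compositions are lists of positive naturals.\<close>

definition nset :: "nat \<Rightarrow> nat set" where
  "nset N = {1..N}"

definition comp :: "nat \<Rightarrow> nat set \<Rightarrow> nat list" where
  "comp N S = (if N = 0 then [] else
     (let xs = [0] @ sorted_list_of_set S @ [N]
      in map (\<lambda>i. xs ! (i+1) - xs ! i) [0..<length xs - 1]))"

text \<open>Overlapping shuffles (quasi-shuffles) of \<alpha> and \<beta> with weight \<gamma>:
  pairs of strictly increasing maps f : [l(\<alpha>)] \<rightarrow> [l(\<gamma>)], g : [l(\<beta>)] \<rightarrow> [l(\<gamma>)]
  (0-indexed, encoded as lists) whose images cover [l(\<gamma>)] and such that
  \<gamma>_k = sum of \<alpha>_i with f i = k plus sum of \<beta>_j with g j = k.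
  Their number is the coefficient of M_\<gamma> in M_\<alpha> M_\<beta>.\<close>
definition overlapping_shuffles :: "nat list \<Rightarrow> nat list \<Rightarrow> nat list \<Rightarrow> (nat list \<times> nat list) set" where
  "overlapping_shuffles \<alpha> \<beta> \<gamma> =
     {(f, g). length f = length \<alpha> \<and> length g = length \<beta> \<and>
              sorted_wrt (<) f \<and> sorted_wrt (<) g \<and>
              set f \<union> set g = {0..<length \<gamma>} \<and>
              (\<forall>k < length \<gamma>. \<gamma> ! k =
                  (\<Sum>i<length \<alpha>. if f ! i = k then \<alpha> ! i else 0)
                + (\<Sum>j<length \<beta>. if g ! j = k then \<beta> ! j else 0))}"

definition conn :: "nat set \<Rightarrow> nat set set" where
  "conn A = {B. B \<noteq> {} \<and> B \<subseteq> A \<and> (\<exists>a b. B = {a..b}) \<and>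
              (\<forall>C. C \<subseteq> A \<and> (\<exists>a b. C = {a..b}) \<and> B \<subseteq> C \<longrightarrow> C = B)}"

definition c1 :: "nat \<Rightarrow> nat set \<Rightarrow> nat set" where
  "c1 N A = (Max ` conn A) - {N}"

definition c2 :: "nat \<Rightarrow> nat set \<Rightarrow> nat set" where
  "c2 N A = (Max ` conn (nset N - A)) - {N}"

definition cset :: "nat \<Rightarrow> nat set \<Rightarrow> nat set" where
  "cset N A = c1 N A \<union> c2 N A"

text \<open>I #_A J for A \<subseteq> [m+n] with |A| = n: b_j is the j-th smallest element of A,
  a_i the i-th smallest element of [m+n] \ A (1-indexed).\<close>
definition shuf_set :: "nat \<Rightarrow> nat \<Rightarrow> nat set \<Rightarrow> nat set \<Rightarrow> nat set \<Rightarrow> nat set" where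
  "shuf_set m n A I J =
     (\<lambda>i. sorted_list_of_set (nset (m+n) - A) ! (i - 1)) ` I
   \<union> (\<lambda>j. sorted_list_of_set A ! (j - 1)) ` J"

end

theory Submission
  imports Defs
begin

text \<open>
  Encode a composition of \<open>N\<close> by the word in \<open>{F, T}\<^sup>N\<close> that marks its partial sums.
  The first part of the weight \<open>\<gamma>\<close> of an overlapping shuffle of \<open>\<alpha>\<close> and \<open>\<beta>\<close> is the first part
  of \<open>\<alpha>\<close>, of \<open>\<beta>\<close>, or their sum; this gives a recursion for the number of overlapping shuffles
  on the length of \<open>\<gamma>\<close>. The same recursion counts the words \<open>w\<close> accepted by an automaton that
  reads the words of \<open>\<alpha>\<close> (letter \<open>F\<close>) and \<open>\<beta>\<close> (letter \<open>T\<close>) interleaved according to \<open>w\<close> and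
  compares them with the word of \<open>\<gamma>\<close>, a merged part being read as the part of \<open>\<beta>\<close> followed
  by the part of \<open>\<alpha>\<close>.

  For \<open>\<alpha> = comp(I\<^sup>c)\<close>, \<open>\<beta> = comp(J\<^sup>c)\<close>, \<open>\<gamma> = comp(K\<^sup>c)\<close> these words are the indicator words of
  \<open>[m] - I\<close>, \<open>[n] - J\<close>, \<open>[m+n] - K\<close>, an accepted word \<open>w\<close> is the indicator word of a set \<open>A\<close>
  with \<open>|A| = n\<close>, the interleaving of the first two words is the indicator word of the
  complement of \<open>I #\<^sub>A J\<close>, and \<open>c(A)\<close> is the set of positions after which \<open>w\<close> switches letters.
  The local checks of the automaton then say exactly that \<open>A\<close> satisfies the conditions of (c).

  Passing to \<open>[m+n] - A\<close> exchanges \<open>c\<^sub>1\<close> and \<open>c\<^sub>2\<close> and the roles of \<open>(m, I)\<close> and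
  \<open>(n, J)\<close>; given the other conditions, \<open>|K - c\<^sub>2(A)| = |I| + |J|\<close> says that \<open>K\<close> misses
  \<open>c\<^sub>1(A)\<close>. Since overlapping shuffles are symmetric in \<open>\<alpha>\<close> and \<open>\<beta>\<close>, (a) = (c) for
  \<open>(n, m, J, I)\<close> turns into (a) = (b).
\<close>

lemma finite_nset [simp]: "finite (nset N)"
  by (simp add: nset_def)

lemma card_nset [simp]: "card (nset N) = N"
  by (simp add: nset_def)

lemma finite_subset_nset: "A \<subseteq> nset N \<Longrightarrow> finite A"
  by (erule finite_subset) simp

lemma Ball_nset_iff: "(\<forall>x\<in>nset N. P x) \<longleftrightarrow> (\<forall>p<N. P (Suc p))"
proof
  assume "\<forall>p<N. P (Suc p)"
  moreover have "\<exists>p<N. x = Suc p" if "x \<in> nset N" for x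
    using that by (cases x) (auto simp: nset_def)
  ultimately show "\<forall>x\<in>nset N. P x" by blast
qed (auto simp: nset_def)

lemma nset_mono: "M \<le> N \<Longrightarrow> nset M \<subseteq> nset N"
  by (auto simp: nset_def)

section \<open>Compositions as words\<close>

fun comp_word :: "nat list \<Rightarrow> bool list" where
  "comp_word [] = []"
| "comp_word (a # as) = replicate (a - 1) False @ True # comp_word as"

lemma comp_word_eq_Nil_iff [simp]: "comp_word \<alpha> = [] \<longleftrightarrow> \<alpha> = []"
  by (cases \<alpha>) auto

fun gaps :: "nat list \<Rightarrow> nat list" where
  "gaps (x # y # r) = (y - x) # gaps (y # r)"
| "gaps _ = []"

lemma gaps_conv_map: "gaps xs = map (\<lambda>i. xs ! (i + 1) - xs ! i) [0..<length xs - 1]"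
proof (induction xs rule: gaps.induct)
  case (1 x y r)
  then show ?case
    by (simp del: upt_Suc add: upt_conv_Cons map_Suc_upt[symmetric] o_def)
qed auto

lemma comp_eq_gaps: "0 < N \<Longrightarrow> comp N S = gaps (0 # sorted_list_of_set S @ [N])"
  by (simp add: comp_def gaps_conv_map Let_def)

lemma zero_notin_gaps: "sorted_wrt (<) xs \<Longrightarrow> 0 \<notin> set (gaps xs)"
  by (induction xs rule: gaps.induct) auto

lemma comp_word_gaps:
  "sorted_wrt (<) (a # xs) \<Longrightarrow> xs \<noteq> [] \<Longrightarrow>
    comp_word (gaps (a # xs)) = map (\<lambda>i. i \<in> set xs) [Suc a..<Suc (last xs)]"
proof (induction xs arbitrary: a)
  case (Cons y r)
  have "a < y" using Cons.prems by simp
  show ?case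
  proof (cases r)
    case Nil
    have "map (\<lambda>i. i = y) [Suc a..<y] = replicate (y - Suc a) False"
      by (rule replicate_eqI) auto
    then show ?thesis using Nil \<open>a < y\<close> by (simp add: upt_Suc_append)
  next
    case (Cons z r')
    have IH: "comp_word (gaps (y # r)) = map (\<lambda>i. i \<in> set r) [Suc y..<Suc (last r)]"
      using Cons.IH Cons.prems \<open>r = z # r'\<close> by simp
    have "y < last r" using Cons.prems \<open>r = z # r'\<close> by (simp add: last_in_set)
    then have split: "[Suc a..<Suc (last r)] = [Suc a..<y] @ y # [Suc y..<Suc (last r)]"
      using \<open>a < y\<close> upt_add_eq_append[of "Suc a" y "Suc (last r) - y"] upt_conv_Cons[of y "Suc (last r)"]
      by simp
    have "map (\<lambda>i. i \<in> set (y # r)) [Suc a..<y] = replicate (y - Suc a) False"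
    proof (rule replicate_eqI)
      have "\<forall>z\<in>set r. y < z" using Cons.prems by simp
      then show "\<And>b. b \<in> set (map (\<lambda>i. i \<in> set (y # r)) [Suc a..<y]) \<Longrightarrow> b = False"
        by auto
    qed simp
    moreover have "map (\<lambda>i. i \<in> set (y # r)) [Suc y..<Suc (last r)] = map (\<lambda>i. i \<in> set r) [Suc y..<Suc (last r)]"
      by (rule map_cong) auto
    ultimately show ?thesis using IH split \<open>a < y\<close> \<open>r = z # r'\<close> by simp
  qed
qed simp

lemma comp_word_comp:
  assumes "S \<subseteq> nset (N - 1)"
  shows "0 \<notin> set (comp N S) \<and> comp_word (comp N S) = map (\<lambda>i. i \<in> S \<or> i = N) [1..<Suc N]"
proof (cases "N = 0")
  case False
  have "finite S" using assms by (rule finite_subset_nset)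
  have "\<forall>s\<in>S. 0 < s \<and> s < N" using assms by (auto simp: nset_def subset_iff)
  then have sorted: "sorted_wrt (<) (0 # sorted_list_of_set S @ [N])"
    using \<open>finite S\<close> False by (auto simp: sorted_wrt_append)
  then show ?thesis
    using zero_notin_gaps[OF sorted] comp_word_gaps[OF sorted] \<open>finite S\<close> False
    by (simp add: comp_eq_gaps)
qed (simp add: comp_def)

lemma comp_word_comp_compl:
  assumes "I \<subseteq> nset (m - 1)"
  shows "0 \<notin> set (comp m (nset (m - 1) - I)) \<and>
    comp_word (comp m (nset (m - 1) - I)) = map (\<lambda>i. i \<notin> I) [1..<Suc m]"
proof -
  have "map (\<lambda>i. i \<in> nset (m - 1) - I \<or> i = m) [1..<Suc m] = map (\<lambda>i. i \<notin> I) [1..<Suc m]"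
    using assms by (intro map_cong) (auto simp: nset_def)
  then show ?thesis using comp_word_comp[of "nset (m - 1) - I" m] by auto
qed

section \<open>Counting overlapping shuffles by the first part\<close>

definition weight :: "nat list \<Rightarrow> nat list \<Rightarrow> nat \<Rightarrow> nat" where
  "weight f \<alpha> k = (\<Sum>(i, a)\<leftarrow>zip f \<alpha>. if i = k then a else 0)"

lemma weight_Cons [simp]: "weight (i # f) (a # \<alpha>) k = (if i = k then a else 0) + weight f \<alpha> k"
  by (simp add: weight_def)

lemma weight_map_Suc_0 [simp]: "weight (map Suc f) \<alpha> 0 = 0"
  by (induction f \<alpha> rule: list_induct2') (simp_all add: weight_def)

lemma weight_map_Suc_Suc [simp]: "weight (map Suc f) \<alpha> (Suc k) = weight f \<alpha> k"
  by (induction f \<alpha> rule: list_induct2') (simp_all add: weight_def)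

lemma mem_overlapping_shuffles_iff:
  "(f, g) \<in> overlapping_shuffles \<alpha> \<beta> \<gamma> \<longleftrightarrow>
     length f = length \<alpha> \<and> length g = length \<beta> \<and> sorted_wrt (<) f \<and> sorted_wrt (<) g \<and>
     set f \<union> set g = {0..<length \<gamma>} \<and> (\<forall>k<length \<gamma>. \<gamma> ! k = weight f \<alpha> k + weight g \<beta> k)"
proof -
  have "weight f \<alpha> k = (\<Sum>i<length \<alpha>. if f ! i = k then \<alpha> ! i else 0)" if "length f = length \<alpha>" for f \<alpha> k
    using that by (simp add: weight_def sum_list_sum_nth atLeast0LessThan)
  then show ?thesis unfolding overlapping_shuffles_def by auto
qed

lemma insert_0_image_Suc_eq_atLeast0LessThan_Suc_iff:
  "insert 0 (Suc ` X) = {0..<Suc L} \<longleftrightarrow> X = {0..<L}"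
proof -
  have "insert 0 (Suc ` X) = insert 0 (Suc ` Y) \<longleftrightarrow> X = Y" for Y :: "nat set"
    by (metis Diff_insert_absorb image_iff inj_image_eq_iff inj_Suc nat.distinct(1))
  then show ?thesis by (metis atLeast0_lessThan_Suc_eq_insert_0)
qed

lemma overlapping_shuffles_Cons_Cons_left:
  "(0 # map Suc f, map Suc g) \<in> overlapping_shuffles (a # \<alpha>) \<beta> (c # \<gamma>) \<longleftrightarrow>
     a = c \<and> (f, g) \<in> overlapping_shuffles \<alpha> \<beta> \<gamma>"
  using insert_0_image_Suc_eq_atLeast0LessThan_Suc_iff[of "set f \<union> set g" "length \<gamma>"]
  by (auto simp: mem_overlapping_shuffles_iff sorted_wrt_map image_Un All_less_Suc2)

lemma overlapping_shuffles_Cons_Cons_both: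
  "(0 # map Suc f, 0 # map Suc g) \<in> overlapping_shuffles (a # \<alpha>) (b # \<beta>) (c # \<gamma>) \<longleftrightarrow>
     a + b = c \<and> (f, g) \<in> overlapping_shuffles \<alpha> \<beta> \<gamma>"
  using insert_0_image_Suc_eq_atLeast0LessThan_Suc_iff[of "set f \<union> set g" "length \<gamma>"]
  by (auto simp: mem_overlapping_shuffles_iff sorted_wrt_map image_Un All_less_Suc2 insert_commute)

lemma overlapping_shuffles_swap:
  "(f, g) \<in> overlapping_shuffles \<alpha> \<beta> \<gamma> \<longleftrightarrow> (g, f) \<in> overlapping_shuffles \<beta> \<alpha> \<gamma>"
  unfolding overlapping_shuffles_def by (auto simp: Un_commute add.commute)

lemma overlapping_shuffles_Cons_Cons_right:
  "(map Suc f, 0 # map Suc g) \<in> overlapping_shuffles \<alpha> (b # \<beta>) (c # \<gamma>) \<longleftrightarrow>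
     b = c \<and> (f, g) \<in> overlapping_shuffles \<alpha> \<beta> \<gamma>"
  using overlapping_shuffles_Cons_Cons_left overlapping_shuffles_swap by metis

lemma map_Suc_notin_overlapping_shuffles_Cons:
  "(map Suc f, map Suc g) \<notin> overlapping_shuffles \<alpha> \<beta> (c # \<gamma>)"
  by (auto simp: mem_overlapping_shuffles_iff set_eq_iff)

lemma sorted_wrt_less_nat_cases:
  assumes "sorted_wrt (<) (f :: nat list)"
  obtains f' where "f = map Suc f'" | f' where "f = 0 # map Suc f'"
proof (cases f)
  case (Cons x r)
  have "map (\<lambda>y. Suc (y - 1)) r = r"
    using assms Cons by (intro map_idI) auto
  then have r: "r = map Suc (map (\<lambda>y. y - 1) r)"
    by (simp add: o_def)
  show ?thesis
  proof (cases x)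
    case 0
    then show ?thesis using Cons r that(2) by blast
  next
    case (Suc x')
    then have "f = map Suc (x' # map (\<lambda>y. y - 1) r)" using Cons r by simp
    then show ?thesis using that(1) by blast
  qed
qed (use that(1)[of "[]"] in simp)

lemma overlapping_shuffles_Cons_cases:
  assumes fg: "(f, g) \<in> overlapping_shuffles \<alpha> \<beta> (c # \<gamma>)"
  obtains (left) \<alpha>' f' g' where "\<alpha> = c # \<alpha>'" "f = 0 # map Suc f'" "g = map Suc g'"
      "(f', g') \<in> overlapping_shuffles \<alpha>' \<beta> \<gamma>"
    | (right) \<beta>' f' g' where "\<beta> = c # \<beta>'" "f = map Suc f'" "g = 0 # map Suc g'"
      "(f', g') \<in> overlapping_shuffles \<alpha> \<beta>' \<gamma>"
    | (both) a \<alpha>' b \<beta>' f' g' where "\<alpha> = a # \<alpha>'" "\<beta> = b # \<beta>'" "a + b = c"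
      "f = 0 # map Suc f'" "g = 0 # map Suc g'" "(f', g') \<in> overlapping_shuffles \<alpha>' \<beta>' \<gamma>"
proof -
  have len: "length f = length \<alpha>" "length g = length \<beta>" and "sorted_wrt (<) f" "sorted_wrt (<) g"
    using fg by (simp_all add: mem_overlapping_shuffles_iff)
  obtain f' where f: "f = map Suc f' \<or> f = 0 # map Suc f'"
    using \<open>sorted_wrt (<) f\<close> by (elim sorted_wrt_less_nat_cases) auto
  obtain g' where g: "g = map Suc g' \<or> g = 0 # map Suc g'"
    using \<open>sorted_wrt (<) g\<close> by (elim sorted_wrt_less_nat_cases) auto
  from f g show thesis
  proof (elim disjE)
    assume "f = map Suc f'" "g = map Suc g'"
    then show thesis using fg map_Suc_notin_overlapping_shuffles_Cons by simp
  next
    assume *: "f = 0 # map Suc f'" "g = map Suc g'"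
    then obtain a \<alpha>' where "\<alpha> = a # \<alpha>'" using len by (cases \<alpha>) auto
    then show thesis using left * fg by (simp add: overlapping_shuffles_Cons_Cons_left)
  next
    assume *: "f = map Suc f'" "g = 0 # map Suc g'"
    then obtain b \<beta>' where "\<beta> = b # \<beta>'" using len by (cases \<beta>) auto
    then show thesis using right * fg by (simp add: overlapping_shuffles_Cons_Cons_right)
  next
    assume *: "f = 0 # map Suc f'" "g = 0 # map Suc g'"
    then obtain a \<alpha>' b \<beta>' where ab: "\<alpha> = a # \<alpha>'" "\<beta> = b # \<beta>'"
      using len by (cases \<alpha>; cases \<beta>) auto
    then have "a + b = c" "(f', g') \<in> overlapping_shuffles \<alpha>' \<beta>' \<gamma>"
      using * fg by (simp_all add: overlapping_shuffles_Cons_Cons_both)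
    then show thesis using both ab * by blast
  qed
qed

lemma overlapping_shuffles_Cons:
  "overlapping_shuffles \<alpha> \<beta> (c # \<gamma>) =
     (if \<alpha> \<noteq> [] \<and> hd \<alpha> = c
      then (\<lambda>(f, g). (0 # map Suc f, map Suc g)) ` overlapping_shuffles (tl \<alpha>) \<beta> \<gamma> else {})
   \<union> (if \<beta> \<noteq> [] \<and> hd \<beta> = c
      then (\<lambda>(f, g). (map Suc f, 0 # map Suc g)) ` overlapping_shuffles \<alpha> (tl \<beta>) \<gamma> else {})
   \<union> (if \<alpha> \<noteq> [] \<and> \<beta> \<noteq> [] \<and> hd \<alpha> + hd \<beta> = c
      then (\<lambda>(f, g). (0 # map Suc f, 0 # map Suc g)) ` overlapping_shuffles (tl \<alpha>) (tl \<beta>) \<gamma> else {})"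
  (is "_ = ?R")
proof (intro equalityI subsetI)
  fix p assume p: "p \<in> overlapping_shuffles \<alpha> \<beta> (c # \<gamma>)"
  obtain f g where [simp]: "p = (f, g)" by fastforce
  from p have "(f, g) \<in> overlapping_shuffles \<alpha> \<beta> (c # \<gamma>)" by simp
  then show "p \<in> ?R"
    by (cases rule: overlapping_shuffles_Cons_cases) force+
next
  fix p assume "p \<in> ?R"
  then show "p \<in> overlapping_shuffles \<alpha> \<beta> (c # \<gamma>)"
    by (cases \<alpha>; cases \<beta>)
       (auto simp: overlapping_shuffles_Cons_Cons_left overlapping_shuffles_Cons_Cons_right
         overlapping_shuffles_Cons_Cons_both split: if_splits)
qed

lemma finite_overlapping_shuffles: "finite (overlapping_shuffles \<alpha> \<beta> \<gamma>)"
proof (rule finite_subset)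
  show "overlapping_shuffles \<alpha> \<beta> \<gamma> \<subseteq>
      {f. set f \<subseteq> {0..<length \<gamma>} \<and> length f = length \<alpha>} \<times> {g. set g \<subseteq> {0..<length \<gamma>} \<and> length g = length \<beta>}"
    unfolding overlapping_shuffles_def by auto
qed (intro finite_cartesian_product finite_lists_length_eq; simp)

definition first_part_rec :: "nat list \<Rightarrow> nat list \<Rightarrow> nat \<Rightarrow> (nat list \<Rightarrow> nat list \<Rightarrow> nat) \<Rightarrow> nat" where
  "first_part_rec \<alpha> \<beta> c F =
     (if \<alpha> \<noteq> [] \<and> hd \<alpha> = c then F (tl \<alpha>) \<beta> else 0)
   + (if \<beta> \<noteq> [] \<and> hd \<beta> = c then F \<alpha> (tl \<beta>) else 0)
   + (if \<alpha> \<noteq> [] \<and> \<beta> \<noteq> [] \<and> hd \<alpha> + hd \<beta> = c then F (tl \<alpha>) (tl \<beta>) else 0)"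

lemma card_Un3_disjoint:
  "finite A \<Longrightarrow> finite B \<Longrightarrow> finite C \<Longrightarrow> A \<inter> B = {} \<Longrightarrow> A \<inter> C = {} \<Longrightarrow> B \<inter> C = {} \<Longrightarrow>
    card (A \<union> B \<union> C) = card A + card B + card C"
  by (simp add: card_Un_disjoint Int_Un_distrib2)

lemma card_if_image: "inj h \<Longrightarrow> card (if P then h ` S else {}) = (if P then card S else 0)"
  by (simp add: card_image inj_on_subset[of h UNIV])

lemma card_overlapping_shuffles_Cons:
  "card (overlapping_shuffles \<alpha> \<beta> (c # \<gamma>)) =
     first_part_rec \<alpha> \<beta> c (\<lambda>\<alpha>' \<beta>'. card (overlapping_shuffles \<alpha>' \<beta>' \<gamma>))"
proof -
  have "inj (\<lambda>(f, g). (0 # map Suc f, map Suc g :: nat list))"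
    "inj (\<lambda>(f, g). (map Suc f, 0 # map Suc g :: nat list))"
    "inj (\<lambda>(f, g). (0 # map Suc f, 0 # map Suc g :: nat list))"
    by (auto simp: inj_def)
  then show ?thesis
    unfolding overlapping_shuffles_Cons first_part_rec_def
    by (subst card_Un3_disjoint) (auto simp: card_if_image finite_overlapping_shuffles)
qed

section \<open>An automaton with the same recursion\<close>

text \<open>
  Reading the letter \<open>F\<close> (\<open>T\<close>) of \<open>w\<close> consumes the next letter \<open>s\<close> of \<open>u\<close> (of \<open>v\<close>) and the
  next letter \<open>t\<close> of the third word. Switching sides is only allowed where the current part
  ends (\<open>s\<close>), and it ends the part of \<open>\<gamma>\<close> as well (\<open>t\<close>), except for a switch from \<open>T\<close> to \<open>F\<close>,
  where the part of \<open>\<beta>\<close> is continued by a part of \<open>\<alpha>\<close>. Without a switch, \<open>s = t\<close>.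
\<close>

definition step_ok :: "bool \<Rightarrow> bool list \<Rightarrow> bool \<Rightarrow> bool \<Rightarrow> bool" where
  "step_ok x w s t \<longleftrightarrow> (if w \<noteq> [] \<and> hd w \<noteq> x then s \<and> (x \<or> t) else s = t)"

fun accepts :: "bool list \<Rightarrow> bool list \<Rightarrow> bool list \<Rightarrow> bool list \<Rightarrow> bool" where
  "accepts u v [] [] \<longleftrightarrow> u = [] \<and> v = []"
| "accepts u v (t # ts) (x # w) \<longleftrightarrow>
     (if x then v \<noteq> [] \<and> step_ok True w (hd v) t \<and> accepts u (tl v) ts w
      else u \<noteq> [] \<and> step_ok False w (hd u) t \<and> accepts (tl u) v ts w)"
| "accepts _ _ _ _ \<longleftrightarrow> False"

lemma accepts_Nil_iff [simp]: "accepts u v t [] \<longleftrightarrow> u = [] \<and> v = [] \<and> t = []"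
  by (cases t) auto

lemma not_accepts_Nil_False [simp]: "\<not> accepts [] v t (False # w)"
  by (cases t) auto

lemma not_accepts_Nil_True [simp]: "\<not> accepts u [] t (True # w)"
  by (cases t) auto

lemma length_accepts: "accepts u v t w \<Longrightarrow> length t = length w"
  by (induction u v t w rule: accepts.induct) (auto split: if_splits)

lemma accepts_False_block:
  "accepts (replicate k False @ True # u) v t (False # w) \<longleftrightarrow>
     (\<exists>t' w'. t = replicate k False @ True # t' \<and> w = replicate k False @ w' \<and> accepts u v t' w')"
proof (induction k arbitrary: t w)
  case 0
  then show ?case by (cases t) (auto simp: step_ok_def)
next
  case (Suc k)
  show ?case
  proof (cases t)
    case (Cons tc t1)
    have "accepts (replicate (Suc k) False @ True # u) v t (False # w) \<longleftrightarrow>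
        \<not> tc \<and> (\<exists>w1. w = False # w1 \<and> accepts (replicate k False @ True # u) v t1 (False # w1))"
      using Cons by (cases w) (auto simp: step_ok_def)
    then show ?thesis using Cons by (auto simp: Suc.IH)
  qed simp
qed

lemma accepts_True_block:
  "accepts u (replicate k False @ True # v) t (True # w) \<longleftrightarrow>
     (\<exists>tc t' w'. t = replicate k False @ tc # t' \<and> w = replicate k True @ w' \<and>
        (tc \<or> (w' \<noteq> [] \<and> \<not> hd w')) \<and> accepts u v t' w')"
proof (induction k arbitrary: t w)
  case 0
  then show ?case by (cases t) (auto simp: step_ok_def)
next
  case (Suc k)
  show ?case
  proof (cases t)
    case (Cons tc t1)
    have "accepts u (replicate (Suc k) False @ True # v) t (True # w) \<longleftrightarrow>
        \<not> tc \<and> (\<exists>w1. w = True # w1 \<and> accepts u (replicate k False @ True # v) t1 (True # w1))"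
      using Cons by (cases w) (auto simp: step_ok_def)
    then show ?thesis using Cons by (auto simp: Suc.IH)
  qed simp
qed

lemma replicate_False_append_True_eq_iff:
  "replicate p False @ True # r = replicate q False @ x # s \<longleftrightarrow>
     (p = q \<and> x \<and> s = r) \<or> (q < p \<and> \<not> x \<and> s = replicate (p - q - 1) False @ True # r)"
proof (induction p arbitrary: q)
  case 0
  then show ?case by (cases q) auto
next
  case (Suc p)
  then show ?case by (cases q) auto
qed

lemma replicate_eq_Cons_pred: "0 < n \<Longrightarrow> replicate n x = x # replicate (n - 1) x"
  by (cases n) auto

lemma accepts_comp_word_Cons_False:
  assumes "0 \<notin> set \<alpha>" "0 < c" "accepts (comp_word \<alpha>) v (comp_word (c # \<gamma>)) (False # w)"
  obtains \<alpha>' w' where "\<alpha> = c # \<alpha>'" "False # w = replicate c False @ w'"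
    "accepts (comp_word \<alpha>') v (comp_word \<gamma>) w'"
proof -
  obtain a \<alpha>' where \<alpha>: "\<alpha> = a # \<alpha>'"
    using assms(3) by (cases \<alpha>) auto
  have "0 < a" using assms(1) \<alpha> by auto
  obtain t' w' where t': "replicate (c - 1) False @ True # comp_word \<gamma> = replicate (a - 1) False @ True # t'"
      and w: "w = replicate (a - 1) False @ w'" and acc: "accepts (comp_word \<alpha>') v t' w'"
    using assms(3) \<alpha> by (auto simp: accepts_False_block)
  then have "a = c" "t' = comp_word \<gamma>"
    using \<open>0 < a\<close> \<open>0 < c\<close> by (auto simp: replicate_False_append_True_eq_iff)
  then show thesis
    using that \<alpha> w acc replicate_eq_Cons_pred[OF \<open>0 < c\<close>, of False] by simp
qed

lemma accepts_comp_word_Cons_cases: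
  assumes pos: "0 \<notin> set \<alpha>" "0 \<notin> set \<beta>" "0 < c"
    and acc: "accepts (comp_word \<alpha>) (comp_word \<beta>) (comp_word (c # \<gamma>)) w"
  obtains (left) \<alpha>' w' where "\<alpha> = c # \<alpha>'" "w = replicate c False @ w'"
      "accepts (comp_word \<alpha>') (comp_word \<beta>) (comp_word \<gamma>) w'"
    | (right) \<beta>' w' where "\<beta> = c # \<beta>'" "w = replicate c True @ w'"
      "accepts (comp_word \<alpha>) (comp_word \<beta>') (comp_word \<gamma>) w'"
    | (both) a \<alpha>' b \<beta>' w' where "\<alpha> = a # \<alpha>'" "\<beta> = b # \<beta>'" "a + b = c"
      "w = replicate b True @ replicate a False @ w'"
      "accepts (comp_word \<alpha>') (comp_word \<beta>') (comp_word \<gamma>) w'"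
proof -
  obtain x w1 where w: "w = x # w1"
    using acc by (cases w) auto
  show thesis
  proof (cases x)
    case False
    with acc w have "accepts (comp_word \<alpha>) (comp_word \<beta>) (comp_word (c # \<gamma>)) (False # w1)"
      by simp
    then obtain \<alpha>' w' where "\<alpha> = c # \<alpha>'" "False # w1 = replicate c False @ w'"
        "accepts (comp_word \<alpha>') (comp_word \<beta>) (comp_word \<gamma>) w'"
      by (rule accepts_comp_word_Cons_False[OF pos(1,3)])
    then show thesis using left w False by simp
  next
    case True
    obtain b \<beta>' where \<beta>: "\<beta> = b # \<beta>'"
      using acc w True by (cases \<beta>) auto
    have "0 < b" using pos \<beta> by auto
    obtain tc t' w' where t': "replicate (c - 1) False @ True # comp_word \<gamma> = replicate (b - 1) False @ tc # t'"
        and w1: "w1 = replicate (b - 1) True @ w'" and "tc \<or> (w' \<noteq> [] \<and> \<not> hd w')"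
        and acc': "accepts (comp_word \<alpha>) (comp_word \<beta>') t' w'"
      using acc w True \<beta> by (auto simp: accepts_True_block)
    have w_eq: "w = replicate b True @ w'"
      using w True w1 replicate_eq_Cons_pred[OF \<open>0 < b\<close>, of True] by simp
    show thesis
    proof (cases tc)
      case True
      then have "b = c" "t' = comp_word \<gamma>"
        using t' \<open>0 < b\<close> \<open>0 < c\<close> by (auto simp: replicate_False_append_True_eq_iff)
      then show thesis using right \<beta> w_eq acc' by blast
    next
      case False
      then obtain w3 where w3: "w' = False # w3"
        using \<open>tc \<or> _\<close> by (cases w') auto
      have "b < c" and "t' = comp_word ((c - b) # \<gamma>)"
        using t' False \<open>0 < b\<close> by (auto simp: replicate_False_append_True_eq_iff)
      then obtain \<alpha>' w'' where "\<alpha> = (c - b) # \<alpha>'" "w' = replicate (c - b) False @ w''"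
          "accepts (comp_word \<alpha>') (comp_word \<beta>') (comp_word \<gamma>) w''"
        using acc' w3 accepts_comp_word_Cons_False[OF pos(1)] by (metis zero_less_diff)
      then show thesis
        using both[of "c - b" \<alpha>' b \<beta>' w''] \<beta> w_eq \<open>b < c\<close> by simp
    qed
  qed
qed

definition accepted :: "nat list \<Rightarrow> nat list \<Rightarrow> nat list \<Rightarrow> bool list set" where
  "accepted \<alpha> \<beta> \<gamma> = {w. accepts (comp_word \<alpha>) (comp_word \<beta>) (comp_word \<gamma>) w}"

lemma accepted_Cons:
  assumes pos: "0 \<notin> set \<alpha>" "0 \<notin> set \<beta>" "0 < c"
  shows "accepted \<alpha> \<beta> (c # \<gamma>) =
     (if \<alpha> \<noteq> [] \<and> hd \<alpha> = c then (@) (replicate c False) ` accepted (tl \<alpha>) \<beta> \<gamma> else {})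
   \<union> (if \<beta> \<noteq> [] \<and> hd \<beta> = c then (@) (replicate c True) ` accepted \<alpha> (tl \<beta>) \<gamma> else {})
   \<union> (if \<alpha> \<noteq> [] \<and> \<beta> \<noteq> [] \<and> hd \<alpha> + hd \<beta> = c
      then (@) (replicate (hd \<beta>) True @ replicate (hd \<alpha>) False) ` accepted (tl \<alpha>) (tl \<beta>) \<gamma> else {})"
  (is "_ = ?R")
proof (intro equalityI subsetI)
  fix w assume "w \<in> accepted \<alpha> \<beta> (c # \<gamma>)"
  then have "accepts (comp_word \<alpha>) (comp_word \<beta>) (comp_word (c # \<gamma>)) w"
    by (simp add: accepted_def)
  then show "w \<in> ?R"
    by (cases rule: accepts_comp_word_Cons_cases[OF pos]) (force simp: accepted_def)+
next
  fix w assume "w \<in> ?R"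
  then consider (left) \<alpha>' w' where "\<alpha> = c # \<alpha>'" "w = replicate c False @ w'" "w' \<in> accepted \<alpha>' \<beta> \<gamma>"
    | (right) \<beta>' w' where "\<beta> = c # \<beta>'" "w = replicate c True @ w'" "w' \<in> accepted \<alpha> \<beta>' \<gamma>"
    | (both) a \<alpha>' b \<beta>' w' where "\<alpha> = a # \<alpha>'" "\<beta> = b # \<beta>'" "a + b = c"
        "w = replicate b True @ replicate a False @ w'" "w' \<in> accepted \<alpha>' \<beta>' \<gamma>"
    by (cases \<alpha>; cases \<beta>) (auto split: if_splits)
  then show "w \<in> accepted \<alpha> \<beta> (c # \<gamma>)"
  proof cases
    case left
    then show ?thesis
      by (auto simp: accepted_def replicate_eq_Cons_pred[OF \<open>0 < c\<close>] accepts_False_block)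
  next
    case right
    then show ?thesis
      by (auto simp: accepted_def replicate_eq_Cons_pred[OF \<open>0 < c\<close>] accepts_True_block)
  next
    case both
    have "0 < a" "0 < b" using pos both by auto
    have c: "c - 1 = (b - 1) + Suc (a - 1)" using \<open>0 < a\<close> \<open>0 < b\<close> \<open>a + b = c\<close> by simp
    have "replicate (c - 1) False = replicate (b - 1) False @ False # replicate (a - 1) False"
      unfolding c by (simp only: replicate_add replicate_Suc)
    then have "accepts (comp_word \<alpha>) (replicate (b - 1) False @ True # comp_word \<beta>')
        (replicate (c - 1) False @ True # comp_word \<gamma>) (True # replicate (b - 1) True @ replicate a False @ w')"
      using both \<open>0 < a\<close> by (auto simp: accepted_def accepts_True_block accepts_False_block
          replicate_eq_Cons_pred[of a])
    then show ?thesis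
      using both \<open>0 < b\<close> by (simp add: accepted_def replicate_eq_Cons_pred[of b])
  qed
qed

lemma finite_accepted: "finite (accepted \<alpha> \<beta> \<gamma>)"
proof (rule finite_subset)
  show "accepted \<alpha> \<beta> \<gamma> \<subseteq> {w. set w \<subseteq> UNIV \<and> length w = length (comp_word \<gamma>)}"
    by (auto simp: accepted_def dest: length_accepts)
qed (rule finite_lists_length_eq; simp)

lemma card_accepted_Cons:
  assumes pos: "0 \<notin> set \<alpha>" "0 \<notin> set \<beta>" "0 < c"
  shows "card (accepted \<alpha> \<beta> (c # \<gamma>)) = first_part_rec \<alpha> \<beta> c (\<lambda>\<alpha>' \<beta>'. card (accepted \<alpha>' \<beta>' \<gamma>))"
proof -
  have inj: "inj ((@) p)" for p :: "bool list"
    by (simp add: inj_def)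
  have "replicate c True @ y \<noteq> replicate b True @ replicate a False @ y'" if "b < c" "0 < a" for a b y y'
  proof -
    have c: "c = b + Suc (c - b - 1)" using \<open>b < c\<close> by simp
    have "replicate c True = replicate b True @ True # replicate (c - b - 1) True"
      by (subst c) (simp only: replicate_add replicate_Suc)
    then show ?thesis using \<open>0 < a\<close> by (simp add: replicate_eq_Cons_pred[of a])
  qed
  moreover have "0 < hd \<beta>" if "\<beta> \<noteq> []"
    using pos that by (metis hd_in_set neq0_conv)
  moreover have "0 < hd \<alpha>" if "\<alpha> \<noteq> []"
    using pos that by (metis hd_in_set neq0_conv)
  ultimately show ?thesis
    unfolding accepted_Cons[OF pos] first_part_rec_def
    using \<open>0 < c\<close>
    by (subst card_Un3_disjoint)
       (auto simp: card_if_image inj finite_accepted replicate_eq_Cons_pred[of c]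
         replicate_eq_Cons_pred[of "hd \<beta>"])
qed

lemma card_overlapping_shuffles_eq_card_accepted:
  "0 \<notin> set \<alpha> \<Longrightarrow> 0 \<notin> set \<beta> \<Longrightarrow> 0 \<notin> set \<gamma> \<Longrightarrow>
    card (overlapping_shuffles \<alpha> \<beta> \<gamma>) = card (accepted \<alpha> \<beta> \<gamma>)"
proof (induction \<gamma> arbitrary: \<alpha> \<beta>)
  case Nil
  have "overlapping_shuffles \<alpha> \<beta> [] = (if \<alpha> = [] \<and> \<beta> = [] then {([], [])} else {})"
    by (auto simp: overlapping_shuffles_def)
  moreover have "accepted \<alpha> \<beta> [] = (if \<alpha> = [] \<and> \<beta> = [] then {[]} else {})"
    by (auto simp: accepted_def elim: accepts.elims)
  ultimately show ?case by simp
next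
  case (Cons c \<gamma>)
  have IH: "card (overlapping_shuffles \<alpha>' \<beta>' \<gamma>) = card (accepted \<alpha>' \<beta>' \<gamma>)"
    if "0 \<notin> set \<alpha>'" "0 \<notin> set \<beta>'" for \<alpha>' \<beta>'
    using Cons that by simp
  have "set (tl xs) \<subseteq> set xs" for xs :: "nat list"
    by (cases xs) auto
  then have "0 \<notin> set (tl \<alpha>)" "0 \<notin> set (tl \<beta>)" "0 < c"
    using Cons.prems by auto
  then show ?case
    using Cons.prems IH
    by (simp add: card_overlapping_shuffles_Cons card_accepted_Cons first_part_rec_def)
qed

fun merge :: "'a list \<Rightarrow> 'a list \<Rightarrow> bool list \<Rightarrow> 'a list" where
  "merge u v [] = []"
| "merge u v (x # w) = (if x then hd v # merge u (tl v) w else hd u # merge (tl u) v w)"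

lemma length_merge [simp]: "length (merge u v w) = length w"
  by (induction u v w rule: merge.induct) auto

lemma nth_merge:
  "p < length w \<Longrightarrow> length (filter Not w) = length u \<Longrightarrow> length (filter id w) = length v \<Longrightarrow>
    merge u v w ! p =
      (if w ! p then v ! length (filter id (take p w)) else u ! length (filter Not (take p w)))"
proof (induction w arbitrary: u v p)
  case (Cons x w)
  show ?case
  proof (cases x)
    case True
    then obtain y v' where "v = y # v'" using Cons.prems by (cases v) auto
    then show ?thesis using True Cons.prems Cons.IH[of "p - 1" u v'] by (cases p) (simp_all add: id_def)
  next
    case False
    then obtain y u' where "u = y # u'" using Cons.prems by (cases u) auto
    then show ?thesis using False Cons.prems Cons.IH[of "p - 1" u' v] by (cases p) (simp_all add: id_def)
  qed
qed simp

lemma accepts_iff_nth: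
  "accepts u v t w \<longleftrightarrow> length t = length w \<and> length (filter Not w) = length u \<and>
     length (filter id w) = length v \<and>
     (\<forall>p<length w. step_ok (w ! p) (drop (Suc p) w) (merge u v w ! p) (t ! p))"
proof (induction w arbitrary: u v t)
  case (Cons x w)
  show ?case
  proof (cases t)
    case (Cons tc t')
    show ?thesis
    proof (cases x)
      case True
      then show ?thesis using Cons Cons.IH[of u "tl v" t'] by (cases v) (auto simp: All_less_Suc2)
    next
      case False
      then show ?thesis using Cons Cons.IH[of "tl u" v t'] by (cases u) (auto simp: All_less_Suc2)
    qed
  qed simp
qed auto

section \<open>The sets \<open>I #\<^sub>A J\<close>, \<open>c\<^sub>1(A)\<close> and \<open>c\<^sub>2(A)\<close>\<close>

definition rank :: "nat set \<Rightarrow> nat \<Rightarrow> nat" where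
  "rank B x = card {y \<in> B. y < x}"

lemma rank_nth_sorted_list_of_set:
  assumes "finite B" "i < card B"
  shows "rank B (sorted_list_of_set B ! i) = i"
proof -
  let ?L = "sorted_list_of_set B"
  have L: "sorted_wrt (<) ?L" "length ?L = card B" "set ?L = B" "distinct ?L"
    using assms by auto
  have less_iff: "?L ! j < ?L ! i \<longleftrightarrow> j < i" if "j < card B" for j
    using sorted_wrt_nth_less[OF L(1), of i j] sorted_wrt_nth_less[OF L(1), of j i] that assms L(2)
    by (cases i j rule: linorder_cases) auto
  have "{y \<in> B. y < ?L ! i} = set (take i ?L)"
  proof (intro set_eqI iffI)
    fix y assume "y \<in> {y \<in> B. y < ?L ! i}"
    then obtain j where "j < card B" "y = ?L ! j" "y < ?L ! i"
      using L(2,3) by (metis (mono_tags, lifting) in_set_conv_nth mem_Collect_eq)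
    then have "j < card B" "y = ?L ! j" "j < i"
      using less_iff by auto
    then show "y \<in> set (take i ?L)"
      using assms(2) L(2) by (auto simp: in_set_conv_nth intro!: exI[of _ j])
  next
    fix y assume "y \<in> set (take i ?L)"
    then obtain j where "j < i" "y = ?L ! j"
      using assms(2) L(2) by (auto simp: in_set_conv_nth)
    then show "y \<in> {y \<in> B. y < ?L ! i}"
      using assms(2) L(2,3) less_iff by (auto intro: nth_mem)
  qed
  then show ?thesis
    using assms L by (simp add: rank_def distinct_card)
qed

lemma nth_sorted_list_of_set_mem: "finite B \<Longrightarrow> i < card B \<Longrightarrow> sorted_list_of_set B ! i \<in> B"
  by (metis length_sorted_list_of_set nth_mem set_sorted_list_of_set)

lemma rank_less_card: "finite B \<Longrightarrow> x \<in> B \<Longrightarrow> rank B x < card B"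
  unfolding rank_def by (rule psubset_card_mono) auto

lemma nth_sorted_list_of_set_rank: "finite B \<Longrightarrow> x \<in> B \<Longrightarrow> sorted_list_of_set B ! rank B x = x"
  by (metis in_set_conv_nth length_sorted_list_of_set rank_nth_sorted_list_of_set
      sorted_list_of_set.set_sorted_key_list_of_set)

lemma inj_on_nth_sorted_list_of_set:
  "finite B \<Longrightarrow> inj_on (\<lambda>i. sorted_list_of_set B ! (i - 1)) (nset (card B))"
  by (rule inj_onI) (auto simp: nset_def nth_eq_iff_index_eq)

lemma image_nth_sorted_list_of_set:
  assumes "finite B" "X \<subseteq> nset (card B)"
  shows "(\<lambda>i. sorted_list_of_set B ! (i - 1)) ` X = {x \<in> B. Suc (rank B x) \<in> X}"
proof (intro set_eqI iffI)
  fix x assume "x \<in> (\<lambda>i. sorted_list_of_set B ! (i - 1)) ` X"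
  then obtain i where "i \<in> X" "x = sorted_list_of_set B ! (i - 1)" by blast
  moreover have "0 < i" "i - 1 < card B" using \<open>i \<in> X\<close> assms(2) by (auto simp: nset_def subset_iff)
  ultimately show "x \<in> {x \<in> B. Suc (rank B x) \<in> X}"
    using assms(1) by (auto simp: rank_nth_sorted_list_of_set nth_sorted_list_of_set_mem)
next
  fix x assume "x \<in> {x \<in> B. Suc (rank B x) \<in> X}"
  then show "x \<in> (\<lambda>i. sorted_list_of_set B ! (i - 1)) ` X"
    using assms(1) nth_sorted_list_of_set_rank by (auto intro!: rev_image_eqI)
qed

lemma shuf_set_eq:
  assumes "A \<subseteq> nset (m + n)" "card A = n" "I \<subseteq> nset (m - 1)" "J \<subseteq> nset (n - 1)"
  shows "shuf_set m n A I J =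
    {x \<in> nset (m + n) - A. Suc (rank (nset (m + n) - A) x) \<in> I} \<union> {x \<in> A. Suc (rank A x) \<in> J}"
proof -
  have "finite A" using assms(1) by (rule finite_subset_nset)
  have "card (nset (m + n) - A) = m" using assms(1,2) by (simp add: card_Diff_subset \<open>finite A\<close>)
  moreover have "I \<subseteq> nset m" "J \<subseteq> nset n"
    using assms(3,4) nset_mono[of "m - 1" m] nset_mono[of "n - 1" n] by auto
  ultimately show ?thesis
    unfolding shuf_set_def using assms(2) \<open>finite A\<close>
      image_nth_sorted_list_of_set[of "nset (m + n) - A" I] image_nth_sorted_list_of_set[of A J]
    by simp
qed

lemma card_shuf_set:
  assumes "A \<subseteq> nset (m + n)" "card A = n" "I \<subseteq> nset (m - 1)" "J \<subseteq> nset (n - 1)"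
  shows "card (shuf_set m n A I J) = card I + card J"
proof -
  let ?Ac = "nset (m + n) - A"
  have "finite A" "finite I" "finite J" using assms finite_subset_nset by auto
  have "card ?Ac = m" using assms(1,2) by (simp add: card_Diff_subset \<open>finite A\<close>)
  moreover have "I \<subseteq> nset m" "J \<subseteq> nset n"
    using assms(3,4) nset_mono[of "m - 1" m] nset_mono[of "n - 1" n] by auto
  ultimately have "inj_on (\<lambda>i. sorted_list_of_set ?Ac ! (i - 1)) I"
      "inj_on (\<lambda>j. sorted_list_of_set A ! (j - 1)) J"
    using inj_on_nth_sorted_list_of_set[of ?Ac] inj_on_nth_sorted_list_of_set[OF \<open>finite A\<close>] assms(2)
    by (simp_all add: inj_on_subset)
  moreover have "(\<lambda>i. sorted_list_of_set ?Ac ! (i - 1)) ` I \<subseteq> ?Ac"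
    using image_nth_sorted_list_of_set[of ?Ac I] \<open>card ?Ac = m\<close> \<open>I \<subseteq> nset m\<close> by auto
  moreover have "(\<lambda>j. sorted_list_of_set A ! (j - 1)) ` J \<subseteq> A"
    using image_nth_sorted_list_of_set[OF \<open>finite A\<close>, of J] assms(2) \<open>J \<subseteq> nset n\<close> by simp
  ultimately show ?thesis
    using \<open>finite I\<close> \<open>finite J\<close> unfolding shuf_set_def
    by (subst card_Un_disjoint) (auto simp: card_image)
qed

lemma Max_atLeastAtMost: "a \<le> b \<Longrightarrow> Max {a..b} = (b :: nat)"
  by (rule Max_eqI) auto

lemma Max_conn_mem: "B \<in> conn A \<Longrightarrow> Max B \<in> A \<and> Suc (Max B) \<notin> A"
proof -
  assume "B \<in> conn A"
  then obtain a b where B: "B = {a..b}" "a \<le> b" "B \<subseteq> A"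
    and maximal: "\<And>C. C \<subseteq> A \<Longrightarrow> \<exists>a b. C = {a..b} \<Longrightarrow> B \<subseteq> C \<Longrightarrow> C = B"
    unfolding conn_def mem_Collect_eq by (metis atLeastatMost_empty_iff)
  have "Suc b \<notin> A"
  proof
    assume "Suc b \<in> A"
    then have "{a..Suc b} \<subseteq> A" using B by (auto simp: le_Suc_eq)
    moreover have "B \<subseteq> {a..Suc b}" using B by auto
    ultimately have "{a..Suc b} = B" using maximal by blast
    then have "Suc b \<in> B" using B by auto
    then show False using B by simp
  qed
  then show ?thesis using B by (auto simp: Max_atLeastAtMost)
qed

lemma interval_in_conn:
  assumes x: "x \<in> A" "Suc x \<notin> A"
  shows "{LEAST a. {a..x} \<subseteq> A..x} \<in> conn A"
proof -
  define a where "a = (LEAST a. {a..x} \<subseteq> A)"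
  have "{x..x} \<subseteq> A" using x by simp
  then have a: "{a..x} \<subseteq> A" "a \<le> x"
    unfolding a_def by (rule LeastI, rule Least_le)
  have a_least: "\<And>c. {c..x} \<subseteq> A \<Longrightarrow> a \<le> c"
    unfolding a_def by (rule Least_le)
  have maximal: "{c..d} = {a..x}" if "{c..d} \<subseteq> A" "{a..x} \<subseteq> {c..d}" for c d
  proof -
    have "c \<le> a" "x \<le> d" using that(2) \<open>a \<le> x\<close> by auto
    have "d \<le> x"
    proof (rule ccontr)
      assume "\<not> d \<le> x"
      then have "Suc x \<in> {c..d}" using \<open>c \<le> a\<close> \<open>a \<le> x\<close> by simp
      then show False using that(1) x by blast
    qed
    moreover have "a \<le> c" using that(1) \<open>x \<le> d\<close> by (intro a_least) auto
    ultimately show ?thesis using \<open>c \<le> a\<close> \<open>x \<le> d\<close> by (metis order_antisym)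
  qed
  show ?thesis
    unfolding conn_def mem_Collect_eq a_def[symmetric]
  proof (intro conjI allI impI)
    show "{a..x} \<noteq> {}" using \<open>a \<le> x\<close> by simp
    fix C assume "C \<subseteq> A \<and> (\<exists>c d. C = {c..d}) \<and> {a..x} \<subseteq> C"
    then show "C = {a..x}" using maximal by blast
  qed (use a in blast)+
qed

lemma Max_conn: "Max ` conn A = {x \<in> A. Suc x \<notin> A}"
proof (intro set_eqI iffI)
  fix x assume "x \<in> {x \<in> A. Suc x \<notin> A}"
  then have "{LEAST a. {a..x} \<subseteq> A..x} \<in> conn A" "(LEAST a. {a..x} \<subseteq> A) \<le> x"
    using interval_in_conn[of x A] Least_le[of "\<lambda>a. {a..x} \<subseteq> A" x] by auto
  then show "x \<in> Max ` conn A"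
    using Max_atLeastAtMost by (metis rev_image_eqI)
qed (use Max_conn_mem in blast)

lemma c1_eq: "c1 N A = {x \<in> A. Suc x \<notin> A \<and> x \<noteq> N}"
  by (auto simp: c1_def Max_conn)

lemma c2_eq: "A \<subseteq> nset N \<Longrightarrow> c2 N A = {x \<in> nset N - A. Suc x \<in> A \<and> x \<noteq> N}"
  by (auto simp: c2_def Max_conn nset_def)

section \<open>Accepted words as subsets of \<open>[m+n]\<close>\<close>

definition set_word :: "nat \<Rightarrow> nat set \<Rightarrow> bool list" where
  "set_word N A = map (\<lambda>x. x \<in> A) [1..<Suc N]"

lemma length_set_word [simp]: "length (set_word N A) = N"
  by (simp add: set_word_def)

lemma nth_set_word: "p < N \<Longrightarrow> set_word N A ! p \<longleftrightarrow> Suc p \<in> A"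
  by (simp add: set_word_def del: upt_Suc)

lemma drop_set_word: "drop p (set_word N A) = map (\<lambda>x. x \<in> A) [Suc p..<Suc N]"
  by (simp add: set_word_def drop_map del: upt_Suc)

lemma length_filter_take_set_word:
  assumes "p \<le> N"
  shows "length (filter P (take p (set_word N A))) = card {x \<in> nset p. P (x \<in> A)}"
proof -
  have "take p (set_word N A) = map (\<lambda>x. x \<in> A) [1..<Suc p]"
    using assms by (simp add: set_word_def take_map take_upt del: upt_Suc)
  then have "length (filter P (take p (set_word N A))) = length (filter (\<lambda>x. P (x \<in> A)) [1..<Suc p])"
    by (simp add: filter_map o_def del: upt_Suc)
  also have "\<dots> = card (set (filter (\<lambda>x. P (x \<in> A)) [1..<Suc p]))"
    by (rule distinct_card[symmetric]) simp
  also have "set (filter (\<lambda>x. P (x \<in> A)) [1..<Suc p]) = {x \<in> nset p. P (x \<in> A)}"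
    by (auto simp: nset_def)
  finally show ?thesis .
qed

lemma set_word_inj:
  assumes "A \<subseteq> nset N" "B \<subseteq> nset N" "set_word N A = set_word N B"
  shows "A = B"
proof (rule set_eqI)
  fix x
  show "x \<in> A \<longleftrightarrow> x \<in> B"
  proof (cases "x \<in> nset N")
    case True
    then have "x - 1 < N" "Suc (x - 1) = x" by (auto simp: nset_def)
    then show ?thesis using assms(3) nth_set_word[of "x - 1" N] by metis
  next
    case False
    then show ?thesis using assms(1,2) by blast
  qed
qed

lemma count_True_take_set_word:
  assumes "A \<subseteq> nset N" "p \<le> N"
  shows "length (filter id (take p (set_word N A))) = rank A (Suc p)"
proof -
  have "{x \<in> nset p. x \<in> A} = {y \<in> A. y < Suc p}"
    using assms(1) by (auto simp: nset_def)
  then show ?thesis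
    using length_filter_take_set_word[OF assms(2), of id] by (simp add: rank_def)
qed

lemma count_False_take_set_word:
  assumes "p \<le> N"
  shows "length (filter Not (take p (set_word N A))) = rank (nset N - A) (Suc p)"
proof -
  have "{x \<in> nset p. x \<notin> A} = {y \<in> nset N - A. y < Suc p}"
    using assms by (auto simp: nset_def)
  then show ?thesis
    using length_filter_take_set_word[OF assms, of Not] by (simp add: rank_def)
qed

lemma rank_Suc_eq_card: "B \<subseteq> nset N \<Longrightarrow> rank B (Suc N) = card B"
  unfolding rank_def by (rule arg_cong[of _ _ card]) (auto simp: nset_def)

lemma count_set_word:
  assumes "A \<subseteq> nset N"
  shows "length (filter id (set_word N A)) = card A" "length (filter Not (set_word N A)) = N - card A"
proof -
  have "finite A" using assms by (rule finite_subset_nset)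
  then show "length (filter id (set_word N A)) = card A" "length (filter Not (set_word N A)) = N - card A"
    using count_True_take_set_word[OF assms, of N] count_False_take_set_word[of N N A]
      rank_Suc_eq_card[OF assms] rank_Suc_eq_card[of "nset N - A" N] assms
    by (simp_all add: card_Diff_subset)
qed

lemma merge_set_word:
  assumes A: "A \<subseteq> nset (m + n)" "card A = n" and IJ: "I \<subseteq> nset (m - 1)" "J \<subseteq> nset (n - 1)"
  shows "merge (map (\<lambda>i. i \<notin> I) [1..<Suc m]) (map (\<lambda>j. j \<notin> J) [1..<Suc n]) (set_word (m + n) A)
    = map (\<lambda>x. x \<notin> shuf_set m n A I J) [1..<Suc (m + n)]"
proof (rule nth_equalityI)
  let ?w = "set_word (m + n) A" and ?Ac = "nset (m + n) - A"
  let ?U = "map (\<lambda>i. i \<notin> I) [1..<Suc m]" and ?V = "map (\<lambda>j. j \<notin> J) [1..<Suc n]"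
  have "finite A" using A(1) by (rule finite_subset_nset)
  have "card ?Ac = m" using A by (simp add: card_Diff_subset \<open>finite A\<close>)
  have totals: "length (filter Not ?w) = m" "length (filter id ?w) = n"
    using count_set_word[OF A(1)] A(2) by simp_all
  fix p assume "p < length (merge (map (\<lambda>i. i \<notin> I) [1..<Suc m]) (map (\<lambda>j. j \<notin> J) [1..<Suc n]) ?w)"
  then have p: "p < m + n" by simp
  have "Suc p \<in> nset (m + n)" using p by (simp add: nset_def)
  show "merge (map (\<lambda>i. i \<notin> I) [1..<Suc m]) (map (\<lambda>j. j \<notin> J) [1..<Suc n]) ?w ! p =
      map (\<lambda>x. x \<notin> shuf_set m n A I J) [1..<Suc (m + n)] ! p"
  proof (cases "Suc p \<in> A")
    case True
    have "rank A (Suc p) < n" using rank_less_card[OF \<open>finite A\<close> True] A(2) by simp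
    then show ?thesis
      using nth_merge[of p ?w ?U ?V] totals True p count_True_take_set_word[OF A(1), of p] nth_set_word[OF p]
        shuf_set_eq[OF A IJ]
      by (simp del: upt_Suc add: nth_map_upt)
  next
    case False
    then have "Suc p \<in> ?Ac" using \<open>Suc p \<in> nset (m + n)\<close> by simp
    then have "rank ?Ac (Suc p) < m" using rank_less_card[of ?Ac] \<open>card ?Ac = m\<close> by simp
    then show ?thesis
      using nth_merge[of p ?w ?U ?V] totals False p count_False_take_set_word[of p "m + n" A] nth_set_word[OF p]
        shuf_set_eq[OF A IJ] \<open>Suc p \<in> ?Ac\<close>
      by (simp del: upt_Suc add: nth_map_upt)
  qed
qed (simp del: upt_Suc)

lemma step_ok_set_word:
  assumes "A \<subseteq> nset N" "x \<in> nset N"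
  shows "step_ok (x \<in> A) (drop x (set_word N A)) s t \<longleftrightarrow>
    (if x \<in> cset N A then s \<and> (x \<in> A \<or> t) else s = t)"
proof -
  have "drop x (set_word N A) \<noteq> [] \<and> hd (drop x (set_word N A)) \<noteq> (x \<in> A) \<longleftrightarrow> x \<in> cset N A"
    using assms by (auto simp: drop_set_word cset_def c1_eq c2_eq nset_def upt_conv_Cons simp del: upt_Suc)
  then show ?thesis by (simp add: step_ok_def)
qed

lemma accepts_set_word_iff:
  assumes A: "A \<subseteq> nset (m + n)" "card A = n" and IJ: "I \<subseteq> nset (m - 1)" "J \<subseteq> nset (n - 1)"
    and K: "K \<subseteq> nset (m + n - 1)"
  shows "accepts (map (\<lambda>i. i \<notin> I) [1..<Suc m]) (map (\<lambda>j. j \<notin> J) [1..<Suc n])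
      (map (\<lambda>x. x \<notin> K) [1..<Suc (m + n)]) (set_word (m + n) A) \<longleftrightarrow>
    shuf_set m n A I J \<inter> cset (m + n) A = {} \<and> shuf_set m n A I J \<subseteq> K \<and>
    K \<subseteq> shuf_set m n A I J \<union> cset (m + n) A \<and> K \<inter> c2 (m + n) A = {}"
  (is "accepts ?U ?V ?T ?w \<longleftrightarrow> _")
proof -
  let ?N = "m + n" and ?S = "shuf_set m n A I J"
  have "accepts ?U ?V ?T ?w \<longleftrightarrow>
      (\<forall>p<?N. step_ok (Suc p \<in> A) (drop (Suc p) ?w) (Suc p \<notin> ?S) (Suc p \<notin> K))"
    using count_set_word[OF A(1)] A(2) merge_set_word[OF A IJ] nth_set_word[of _ ?N A]
    by (simp add: accepts_iff_nth nth_map_upt del: upt_Suc)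
  also have "\<dots> \<longleftrightarrow> (\<forall>x\<in>nset ?N. step_ok (x \<in> A) (drop x ?w) (x \<notin> ?S) (x \<notin> K))"
    by (simp add: Ball_nset_iff)
  also have "\<dots> \<longleftrightarrow> (\<forall>x\<in>nset ?N. if x \<in> cset ?N A then x \<notin> ?S \<and> (x \<in> A \<or> x \<notin> K) else (x \<in> ?S \<longleftrightarrow> x \<in> K))"
    by (intro ball_cong refl) (simp add: step_ok_set_word[OF A(1)])
  also have "\<dots> \<longleftrightarrow> ?S \<inter> cset ?N A = {} \<and> ?S \<subseteq> K \<and> K \<subseteq> ?S \<union> cset ?N A \<and> K \<inter> c2 ?N A = {}"
  proof -
    have "?S \<subseteq> nset ?N" using shuf_set_eq[OF A IJ] A(1) by auto
    moreover have "K \<subseteq> nset ?N" using K nset_mono[of "?N - 1" ?N] by simp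
    moreover have "c2 ?N A \<subseteq> cset ?N A - A" unfolding cset_def c2_eq[OF A(1)] by blast
    moreover have "cset ?N A - A \<subseteq> c2 ?N A" unfolding cset_def c1_eq by blast
    ultimately show ?thesis by (simp only: if_bool_eq_conj) blast
  qed
  finally show ?thesis .
qed

lemma card_overlapping_shuffles_eq_card_sets_c:
  assumes I: "I \<subseteq> nset (m - 1)" and J: "J \<subseteq> nset (n - 1)" and K: "K \<subseteq> nset (m + n - 1)"
  shows "card (overlapping_shuffles (comp m (nset (m - 1) - I)) (comp n (nset (n - 1) - J))
                 (comp (m + n) (nset (m + n - 1) - K)))
    = card {A. A \<subseteq> nset (m + n) \<and> card A = n \<and>
               shuf_set m n A I J \<inter> cset (m + n) A = {} \<and>
               shuf_set m n A I J \<subseteq> K \<and> K \<subseteq> shuf_set m n A I J \<union> cset (m + n) A \<and>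
               K \<inter> c2 (m + n) A = {}}"
    (is "card (overlapping_shuffles ?\<alpha> ?\<beta> ?\<gamma>) = card ?C")
proof -
  let ?U = "map (\<lambda>i. i \<notin> I) [1..<Suc m]" and ?V = "map (\<lambda>j. j \<notin> J) [1..<Suc n]"
    and ?T = "map (\<lambda>x. x \<notin> K) [1..<Suc (m + n)]"
  note words = comp_word_comp_compl[OF I] comp_word_comp_compl[OF J] comp_word_comp_compl[OF K]
  have "card (overlapping_shuffles ?\<alpha> ?\<beta> ?\<gamma>) = card (accepted ?\<alpha> ?\<beta> ?\<gamma>)"
    using words by (intro card_overlapping_shuffles_eq_card_accepted) auto
  also have "accepted ?\<alpha> ?\<beta> ?\<gamma> = set_word (m + n) ` ?C"
  proof (intro equalityI subsetI)
    fix w assume "w \<in> accepted ?\<alpha> ?\<beta> ?\<gamma>"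
    then have acc: "accepts ?U ?V ?T w" using words by (simp add: accepted_def)
    define A where "A = {x \<in> nset (m + n). w ! (x - 1)}"
    have "A \<subseteq> nset (m + n)" by (auto simp: A_def)
    have "length w = m + n" using length_accepts[OF acc] by (simp del: upt_Suc)
    then have w: "w = set_word (m + n) A"
      by (intro nth_equalityI) (auto simp: nth_set_word A_def nset_def)
    have "card A = n"
      using count_set_word(1)[OF \<open>A \<subseteq> nset (m + n)\<close>] acc[unfolded accepts_iff_nth] w by simp
    then show "w \<in> set_word (m + n) ` ?C"
      using acc w \<open>A \<subseteq> nset (m + n)\<close> accepts_set_word_iff[OF _ _ I J K] by blast
  next
    fix w assume "w \<in> set_word (m + n) ` ?C"
    then show "w \<in> accepted ?\<alpha> ?\<beta> ?\<gamma>"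
      using words accepts_set_word_iff[OF _ _ I J K] by (auto simp: accepted_def)
  qed
  also have "card (set_word (m + n) ` ?C) = card ?C"
    by (intro card_image inj_onI) (use set_word_inj in blast)
  finally show ?thesis .
qed

section \<open>Complementation\<close>

lemma card_overlapping_shuffles_swap:
  "card (overlapping_shuffles \<alpha> \<beta> \<gamma>) = card (overlapping_shuffles \<beta> \<alpha> \<gamma>)"
proof -
  have "overlapping_shuffles \<beta> \<alpha> \<gamma> = prod.swap ` overlapping_shuffles \<alpha> \<beta> \<gamma>"
    using overlapping_shuffles_swap by force
  then show ?thesis by (simp add: card_image)
qed

lemma shuf_set_compl:
  "A \<subseteq> nset (m + n) \<Longrightarrow> shuf_set n m (nset (m + n) - A) J I = shuf_set m n A I J"
  by (auto simp: shuf_set_def add.commute Diff_Diff_Int Int_absorb1)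

lemma c2_compl: "A \<subseteq> nset N \<Longrightarrow> c2 N (nset N - A) = c1 N A"
  by (simp add: c1_def c2_def Diff_Diff_Int Int_absorb1)

lemma c1_compl: "c1 N (nset N - A) = c2 N A"
  by (simp add: c1_def c2_def)

lemma cset_compl: "A \<subseteq> nset N \<Longrightarrow> cset N (nset N - A) = cset N A"
  by (simp add: cset_def c1_compl c2_compl Un_commute)

lemma c1_Int_c2: "c1 N A \<inter> c2 N A = {}"
  by (auto simp: c1_def c2_def Max_conn)

lemma card_Diff_eq_card_iff:
  assumes "finite K" "S \<subseteq> K" "K \<subseteq> S \<union> X \<union> Y" "S \<inter> (X \<union> Y) = {}" "X \<inter> Y = {}"
  shows "card (K - Y) = card S \<longleftrightarrow> K \<inter> X = {}"
proof -
  have "K - Y = S \<union> (K \<inter> X)" and "S \<inter> (K \<inter> X) = {}" using assms(2-5) by blast+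
  then have "card (K - Y) = card S + card (K \<inter> X)"
    using assms(1) finite_subset[OF assms(2)] by (simp add: card_Un_disjoint)
  then show ?thesis using assms(1) by simp
qed

lemma card_eq_card_compl:
  assumes "\<And>A. A \<in> \<A> \<Longrightarrow> A \<subseteq> nset N" "\<And>A. A \<in> \<B> \<Longrightarrow> A \<subseteq> nset N"
    and "\<And>A. A \<subseteq> nset N \<Longrightarrow> A \<in> \<A> \<longleftrightarrow> nset N - A \<in> \<B>"
  shows "card \<A> = card \<B>"
proof (rule bij_betw_same_card[of "\<lambda>A. nset N - A"], rule bij_betw_byWitness[of _ "\<lambda>A. nset N - A"])
  have compl_compl: "nset N - (nset N - A) = A" if "A \<subseteq> nset N" for A
    using that by blast
  show "\<forall>A\<in>\<A>. nset N - (nset N - A) = A" "\<forall>A\<in>\<B>. nset N - (nset N - A) = A"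
    using assms(1,2) compl_compl by simp_all
  show "(\<lambda>A. nset N - A) ` \<A> \<subseteq> \<B>"
  proof (rule image_subsetI)
    fix A assume "A \<in> \<A>"
    then show "nset N - A \<in> \<B>" using assms(3)[OF assms(1)] by simp
  qed
  show "(\<lambda>A. nset N - A) ` \<B> \<subseteq> \<A>"
  proof (rule image_subsetI)
    fix B assume "B \<in> \<B>"
    then show "nset N - B \<in> \<A>"
      using assms(3)[OF Diff_subset] compl_compl[OF assms(2)] by simp
  qed
qed

lemma card_sets_b_eq_card_sets_c_swap:
  assumes I: "I \<subseteq> nset (m - 1)" and J: "J \<subseteq> nset (n - 1)" and K: "K \<subseteq> nset (m + n - 1)"
  shows "card {A. A \<subseteq> nset (m + n) \<and> card A = n \<and>
                  shuf_set m n A I J \<inter> cset (m + n) A = {} \<and>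
                  shuf_set m n A I J \<subseteq> K \<and> K \<subseteq> shuf_set m n A I J \<union> cset (m + n) A \<and>
                  card (K - c2 (m + n) A) = card I + card J}
       = card {A. A \<subseteq> nset (n + m) \<and> card A = m \<and>
                  shuf_set n m A J I \<inter> cset (n + m) A = {} \<and>
                  shuf_set n m A J I \<subseteq> K \<and> K \<subseteq> shuf_set n m A J I \<union> cset (n + m) A \<and>
                  K \<inter> c2 (n + m) A = {}}"
  unfolding add.commute[of n m]
proof (rule card_eq_card_compl, unfold mem_Collect_eq)
  fix A assume A: "A \<subseteq> nset (m + n)"
  let ?S = "shuf_set m n A I J" and ?Ac = "nset (m + n) - A"
  have "finite A" using A by (rule finite_subset_nset)
  have "card A = n \<longleftrightarrow> card ?Ac = m"
    using A card_mono[OF _ A] by (auto simp: card_Diff_subset \<open>finite A\<close>)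
  moreover have "card (K - c2 (m + n) A) = card I + card J \<longleftrightarrow> K \<inter> c1 (m + n) A = {}"
    if "card A = n" "?S \<inter> cset (m + n) A = {}" "?S \<subseteq> K" "K \<subseteq> ?S \<union> cset (m + n) A"
  proof -
    have "finite K" using K by (rule finite_subset_nset)
    then show ?thesis
      using card_Diff_eq_card_iff[of K ?S "c1 (m + n) A" "c2 (m + n) A"] that c1_Int_c2
        card_shuf_set[OF A \<open>card A = n\<close> I J]
      by (simp add: cset_def Un_assoc)
  qed
  ultimately show "A \<subseteq> nset (m + n) \<and> card A = n \<and> ?S \<inter> cset (m + n) A = {} \<and>
        ?S \<subseteq> K \<and> K \<subseteq> ?S \<union> cset (m + n) A \<and> card (K - c2 (m + n) A) = card I + card J
    \<longleftrightarrow> ?Ac \<subseteq> nset (m + n) \<and> card ?Ac = m \<and>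
        shuf_set n m ?Ac J I \<inter> cset (m + n) ?Ac = {} \<and> shuf_set n m ?Ac J I \<subseteq> K \<and>
        K \<subseteq> shuf_set n m ?Ac J I \<union> cset (m + n) ?Ac \<and> K \<inter> c2 (m + n) ?Ac = {}"
    using A by (auto simp: shuf_set_compl[OF A, unfolded add.commute[of n m]] cset_compl c2_compl)
qed auto

theorem corollary4p14:
  fixes m n :: nat and I J K :: "nat set"
  assumes "I \<subseteq> nset (m - 1)" and "J \<subseteq> nset (n - 1)" and "K \<subseteq> nset (m + n - 1)"
  shows "card (overlapping_shuffles (comp m (nset (m - 1) - I)) (comp n (nset (n - 1) - J))
                 (comp (m + n) (nset (m + n - 1) - K)))
         = card {A. A \<subseteq> nset (m + n) \<and> card A = n \<and>
                    shuf_set m n A I J \<inter> cset (m + n) A = {} \<and>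
                    shuf_set m n A I J \<subseteq> K \<and> K \<subseteq> shuf_set m n A I J \<union> cset (m + n) A \<and>
                    card (K - c2 (m + n) A) = card I + card J}
       \<and> card {A. A \<subseteq> nset (m + n) \<and> card A = n \<and>
                    shuf_set m n A I J \<inter> cset (m + n) A = {} \<and>
                    shuf_set m n A I J \<subseteq> K \<and> K \<subseteq> shuf_set m n A I J \<union> cset (m + n) A \<and>
                    card (K - c2 (m + n) A) = card I + card J}
         = card {A. A \<subseteq> nset (m + n) \<and> card A = n \<and>
                    shuf_set m n A I J \<inter> cset (m + n) A = {} \<and>
                    shuf_set m n A I J \<subseteq> K \<and> K \<subseteq> shuf_set m n A I J \<union> cset (m + n) A \<and>
                    K \<inter> c2 (m + n) A = {}}"
proof -
  note c_count = card_overlapping_shuffles_eq_card_sets_c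
  have "K \<subseteq> nset (n + m - 1)" using assms(3) by (simp add: add.commute)
  have "card (overlapping_shuffles (comp m (nset (m - 1) - I)) (comp n (nset (n - 1) - J))
                 (comp (m + n) (nset (m + n - 1) - K)))
      = card (overlapping_shuffles (comp n (nset (n - 1) - J)) (comp m (nset (m - 1) - I))
                 (comp (n + m) (nset (n + m - 1) - K)))"
    by (simp add: card_overlapping_shuffles_swap add.commute)
  also have "\<dots> = card {A. A \<subseteq> nset (n + m) \<and> card A = m \<and>
                  shuf_set n m A J I \<inter> cset (n + m) A = {} \<and>
                  shuf_set n m A J I \<subseteq> K \<and> K \<subseteq> shuf_set n m A J I \<union> cset (n + m) A \<and>
                  K \<inter> c2 (n + m) A = {}}"
    by (rule c_count[OF assms(2,1) \<open>K \<subseteq> nset (n + m - 1)\<close>])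
  finally show ?thesis
    using c_count[OF assms] card_sets_b_eq_card_sets_c_swap[OF assms] by simp
qed

end
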